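(* Let $m=(m_1,m_2)\in\mathbb{R}^2$ with $m_1>0$ and $m_2\geq 0$. Let $b_1\in\mathbb{R}$, $b_2\in\mathbb{Z}$, and $L_1,L_2$ positive integers with $L_1\geq \frac{m_2}{m_1}+1$. Then the set $$P(b_1,b_2,L_1,L_2)=\Big\{x\in\mathbb{Z}^2:\ 0\leq \tfrac{m}{m_1}\cdot(x-b)<L_1,\ 0\leq x_2-b_2<L_2\Big\},\qquad b=(b_1,b_2),$$ is connected as a subgraph of the nearest-neighbor graph of $\mathbb{Z}^2$.
   Context: Two points of $\mathbb{Z}^2$ are neighbors if they differ by $\pm e_1$ or $\pm e_2$; a subset is connected if the induced subgraph is connected. *)

theory Defs
  imports Main Complex_Main
begin

definition zneighbor :: "int \<times> int \<Rightarrow> int \<times> int \<Rightarrow> bool" where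
  "zneighbor p q \<longleftrightarrow> \<bar>fst p - fst q\<bar> + \<bar>snd p - snd q\<bar> = 1"

definition zconnected :: "(int \<times> int) set \<Rightarrow> bool" where
  "zconnected S \<longleftrightarrow> (\<forall>p\<in>S. \<forall>q\<in>S. \<exists>xs. xs \<noteq> [] \<and> hd xs = p \<and> last xs = q \<and> set xs \<subseteq> S \<and>
       (\<forall>i. Suc i < length xs \<longrightarrow> zneighbor (xs ! i) (xs ! Suc i)))"

definition Pset :: "real \<Rightarrow> real \<Rightarrow> real \<Rightarrow> int \<Rightarrow> nat \<Rightarrow> nat \<Rightarrow> (int \<times> int) set" where
  "Pset m1 m2 b1 b2 L1 L2 = {x. let t = (m1 * (real_of_int (fst x) - b1) + m2 * real_of_int (snd x - b2)) / m1
      in 0 \<le> t \<and> t < real L1 \<and> 0 \<le> snd x - b2 \<and> snd x - b2 < int L2}"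

end

theory Submission
  imports Defs
begin

text \<open>Each row of P is the set of integers in the half-open real interval
  \<open>[A y, A y + L1)\<close> with \<open>A y = b1 - (m2/m1) (y - b2)\<close>, so the rows are nonempty integer intervals.
  Passing from row \<open>y\<close> to row \<open>y + 1\<close> shifts the interval left by \<open>m2/m1 \<le> L1 - 1\<close>, so the
  leftmost point of row \<open>y\<close> still lies in row \<open>y + 1\<close>. A stack of nonempty integer intervals
  in which consecutive intervals overlap is connected: walk along a row to a common point,
  then step up.\<close>

definition zedge :: "(int \<times> int) set \<Rightarrow> int \<times> int \<Rightarrow> int \<times> int \<Rightarrow> bool" where
  "zedge S p q \<longleftrightarrow> p \<in> S \<and> q \<in> S \<and> zneighbor p q"

lemma symp_zedge: "symp (zedge S)"
  unfolding symp_def zedge_def zneighbor_def by (simp add: abs_minus_commute)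

lemma zwalk_if_rtranclp_zedge:
  assumes "(zedge S)\<^sup>*\<^sup>* p q" and "p \<in> S"
  shows "\<exists>xs. xs \<noteq> [] \<and> hd xs = p \<and> last xs = q \<and> set xs \<subseteq> S \<and>
           (\<forall>i. Suc i < length xs \<longrightarrow> zneighbor (xs ! i) (xs ! Suc i))"
  using assms(1)
proof (induction rule: rtranclp_induct)
  case base
  show ?case using assms(2) by (intro exI[of _ "[p]"]) auto
next
  case (step q r)
  then obtain xs where xs: "xs \<noteq> []" "hd xs = p" "last xs = q" "set xs \<subseteq> S"
    and walk: "\<forall>i. Suc i < length xs \<longrightarrow> zneighbor (xs ! i) (xs ! Suc i)" by blast
  have "zneighbor ((xs @ [r]) ! i) ((xs @ [r]) ! Suc i)" if "Suc i < length (xs @ [r])" for i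
  proof (cases "Suc i < length xs")
    case True
    then show ?thesis using walk by (simp add: nth_append)
  next
    case False
    then have "i = length xs - 1" "Suc i = length xs" using that by simp_all
    then show ?thesis
      using xs(1,3) \<open>zedge S q r\<close> by (simp add: nth_append last_conv_nth zedge_def)
  qed
  then show ?case using xs \<open>zedge S q r\<close> by (intro exI[of _ "xs @ [r]"]) (auto simp: zedge_def)
qed

lemma zconnectedI_hub:
  assumes "p0 \<in> S" and "\<And>q. q \<in> S \<Longrightarrow> (zedge S)\<^sup>*\<^sup>* p0 q"
  shows "zconnected S"
  unfolding zconnected_def
proof (intro ballI)
  fix p q assume "p \<in> S" "q \<in> S"
  have "(zedge S)\<^sup>*\<^sup>* p p0"
    using assms(2)[OF \<open>p \<in> S\<close>] symp_rtranclp[OF symp_zedge] by (meson sympD)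
  then have "(zedge S)\<^sup>*\<^sup>* p q" using assms(2)[OF \<open>q \<in> S\<close>] by simp
  then show "\<exists>xs. xs \<noteq> [] \<and> hd xs = p \<and> last xs = q \<and> set xs \<subseteq> S \<and>
      (\<forall>i. Suc i < length xs \<longrightarrow> zneighbor (xs ! i) (xs ! Suc i))"
    using \<open>p \<in> S\<close> by (rule zwalk_if_rtranclp_zedge)
qed

lemma rtranclp_zedge_row:
  assumes "u \<le> v" and "\<And>w. u \<le> w \<Longrightarrow> w \<le> v \<Longrightarrow> (w, y) \<in> S"
  shows "(zedge S)\<^sup>*\<^sup>* (u, y) (v, y)"
  using assms
proof (induction v rule: int_ge_induct)
  case base
  then show ?case by simp
next
  case (step v)
  then have "(zedge S)\<^sup>*\<^sup>* (u, y) (v, y)" by simp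
  moreover have "zedge S (v, y) (v + 1, y)"
    using step.hyps step.prems unfolding zedge_def zneighbor_def by simp
  ultimately show ?case by simp
qed

lemma zconnected_interval_stack:
  fixes l r :: "int \<Rightarrow> int" and y0 y1 :: int
  assumes nonempty: "\<And>y. y0 \<le> y \<Longrightarrow> y \<le> y1 \<Longrightarrow> l y \<le> r y"
    and overlap: "\<And>y. y0 \<le> y \<Longrightarrow> y < y1 \<Longrightarrow> l (y + 1) \<le> r y \<and> l y \<le> r (y + 1)"
    and "y0 \<le> y1"
  shows "zconnected {(u, y). y0 \<le> y \<and> y \<le> y1 \<and> l y \<le> u \<and> u \<le> r y}"
    (is "zconnected ?S")
proof -
  have row: "(zedge ?S)\<^sup>*\<^sup>* (u, y) (v, y)"
    if "y0 \<le> y" "y \<le> y1" "l y \<le> u" "u \<le> r y" "l y \<le> v" "v \<le> r y" for u v y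
  proof (cases "u \<le> v")
    case True
    then show ?thesis using that by (intro rtranclp_zedge_row) auto
  next
    case False
    then have "(zedge ?S)\<^sup>*\<^sup>* (v, y) (u, y)" using that by (intro rtranclp_zedge_row) auto
    then show ?thesis using symp_rtranclp[OF symp_zedge] by (meson sympD)
  qed
  have to_left_end: "y \<le> y1 \<longrightarrow> (zedge ?S)\<^sup>*\<^sup>* (l y0, y0) (l y, y)" if "y0 \<le> y" for y
    using that
  proof (induction y rule: int_ge_induct)
    case base
    then show ?case by simp
  next
    case (step y)
    show ?case
    proof
      assume "y + 1 \<le> y1"
      define w where "w = max (l y) (l (y + 1))"
      have w: "l y \<le> w" "w \<le> r y" "l (y + 1) \<le> w" "w \<le> r (y + 1)"
        using nonempty overlap step.hyps \<open>y + 1 \<le> y1\<close> unfolding w_def by force+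
      have "(zedge ?S)\<^sup>*\<^sup>* (l y0, y0) (w, y)"
        using step nonempty row[of y "l y" w] w \<open>y + 1 \<le> y1\<close> by fastforce
      moreover have "zedge ?S (w, y) (w, y + 1)"
        using w step.hyps \<open>y + 1 \<le> y1\<close> unfolding zedge_def zneighbor_def by simp
      moreover have "(zedge ?S)\<^sup>*\<^sup>* (w, y + 1) (l (y + 1), y + 1)"
        using row[of "y + 1" w "l (y + 1)"] w step.hyps \<open>y + 1 \<le> y1\<close> by simp
      ultimately show "(zedge ?S)\<^sup>*\<^sup>* (l y0, y0) (l (y + 1), y + 1)" by simp
    qed
  qed
  show ?thesis
  proof (rule zconnectedI_hub)
    show "(l y0, y0) \<in> ?S" using nonempty assms(3) by simp
    fix q assume "q \<in> ?S"
    then obtain u y where q: "q = (u, y)" "y0 \<le> y" "y \<le> y1" "l y \<le> u" "u \<le> r y" by auto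
    then show "(zedge ?S)\<^sup>*\<^sup>* (l y0, y0) q"
      using to_left_end[of y] row[of y "l y" u] by simp
  qed
qed

lemma Pset_eq_interval_stack:
  fixes m1 m2 b1 :: real and b2 :: int and L1 L2 :: nat
  assumes "m1 > 0"
  defines "A \<equiv> \<lambda>y. b1 - m2 / m1 * real_of_int (y - b2)"
  shows "Pset m1 m2 b1 b2 L1 L2 =
    {(u, y). b2 \<le> y \<and> y \<le> b2 + int L2 - 1 \<and> \<lceil>A y\<rceil> \<le> u \<and> u \<le> \<lceil>A y + real L1\<rceil> - 1}"
proof -
  have "(m1 * (real_of_int u - b1) + m2 * real_of_int (y - b2)) / m1 = real_of_int u - A y"
    for u y using assms(1) unfolding A_def by (simp add: field_simps)
  moreover have "u \<le> \<lceil>x\<rceil> - 1 \<longleftrightarrow> real_of_int u < x" for u x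
    using less_ceiling_iff[of u x] by linarith
  ultimately show ?thesis
    unfolding Pset_def Let_def by (auto simp: ceiling_le_iff)
qed

theorem mainTheorem5:
  fixes m1 m2 b1 :: real and b2 :: int and L1 L2 :: nat
  assumes "m1 > 0" and "m2 \<ge> 0" and "L1 > 0" and "L2 > 0"
    and "real L1 \<ge> m2 / m1 + 1"
  shows "zconnected (Pset m1 m2 b1 b2 L1 L2)"
proof -
  define c where "c = m2 / m1"
  define A where "A y = b1 - c * real_of_int (y - b2)" for y
  have c: "0 \<le> c" "c + 1 \<le> real L1" using assms unfolding c_def by simp_all
  have ceiling_A: "A y \<le> \<lceil>A y\<rceil>" "\<lceil>A y\<rceil> < A y + 1" for y by linarith+
  have shift: "A (y + 1) = A y - c" for y unfolding A_def by (simp add: algebra_simps)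
  have "zconnected {(u, y). b2 \<le> y \<and> y \<le> b2 + int L2 - 1 \<and>
                            \<lceil>A y\<rceil> \<le> u \<and> u \<le> \<lceil>A y + real L1\<rceil> - 1}"
  proof (rule zconnected_interval_stack)
    show row_nonempty: "\<lceil>A y\<rceil> \<le> \<lceil>A y + real L1\<rceil> - 1" for y
      using ceiling_A[of y] assms(3) less_ceiling_iff by fastforce
    show "\<lceil>A (y + 1)\<rceil> \<le> \<lceil>A y + real L1\<rceil> - 1 \<and> \<lceil>A y\<rceil> \<le> \<lceil>A (y + 1) + real L1\<rceil> - 1" for y
    proof
      have "\<lceil>A (y + 1)\<rceil> \<le> \<lceil>A y\<rceil>" using shift c by (simp add: ceiling_mono)
      then show "\<lceil>A (y + 1)\<rceil> \<le> \<lceil>A y + real L1\<rceil> - 1" using row_nonempty[of y] by simp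
      have "real_of_int \<lceil>A y\<rceil> < A (y + 1) + real L1" using ceiling_A[of y] shift[of y] c by linarith
      then show "\<lceil>A y\<rceil> \<le> \<lceil>A (y + 1) + real L1\<rceil> - 1" using less_ceiling_iff by fastforce
    qed
    show "b2 \<le> b2 + int L2 - 1" using assms(4) by simp
  qed
  then show ?thesis
    using Pset_eq_interval_stack[OF assms(1), of m2 b1 b2 L1 L2] unfolding A_def c_def by simp
qed

end
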